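(* Let $X=(x_{ij})$ be a $q$-generic $n\times d$ matrix and work in the algebra $K_q\langle x_{ij}\rangle/(\text{$q$-generic relations})$. Let $1\le r\le d$, let $I=(i_1<i_2<\cdots<i_{d+r})$ be an increasing tuple of elements of $[n]$, and let $J=(j_1,\dots,j_{d-r})$ be a tuple of elements of $[n]$. For $1\le s\le d+r$ let $I_{(s)}$ denote $I$ with $i_s$ removed. All subsets of $I$ are listed in increasing order. Then $$\sum_{s=1}^{d+r}(-q)^{2(r-1)-\ell(I_{(s)}|i_{s})}\sum_{\substack{\Lambda'\subseteq I_{(s)}\\ |\Lambda'|=r-1}}(-q)^{-\ell(I_{(s)}\setminus\Lambda'\,|\,\Lambda')}\big[I_{(s)}\setminus\Lambda'\big]\big[\Lambda'|i_{s}|J\big] =\Big(\sum_{t=0}^{r-1}q^{2t}\Big)\sum_{\substack{\Lambda\subseteq I\\ |\Lambda|=r}}(-q)^{-\ell(I\setminus\Lambda|\Lambda)}\big[I\setminus\Lambda\big]\big[\Lambda|J\big].$$ In particular, the Young symmetry expression for $(I,J)$ with parameter $r$ is a $K_q$-linear combination of Young symmetry expressions with parameter $r-1$ (for the pairs $(I_{(s)},(i_s,J))$), up to the scalar factor $\sum_{t=0}^{r-1}q^{2t}$.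
   Context: $K_q$ is a field of characteristic $0$ with a distinguished element $q\neq0$ that is not a root of unity. An $n\times m$ matrix $X=(x_{ij})$ is $q$-generic if its entries satisfy, for all $i<j$ and $k<l$: $x_{kj}x_{ki}=q\,x_{ki}x_{kj}$; $x_{jk}x_{ik}=q\,x_{ik}x_{jk}$; $x_{jk}x_{il}=x_{il}x_{jk}$; $x_{jl}x_{ik}=x_{ik}x_{jl}+(q-q^{-1})x_{il}x_{jk}$. For a square matrix $A=(a_{ij})$ of size $m$, the quantum determinant is $\det_qA=\sum_{\sigma\in S_m}(-q)^{-\ell(\sigma)}a_{1\sigma1}a_{2\sigma2}\cdots a_{m\sigma m}$. For a tuple $K=(k_1,\dots,k_m)$ of elements of $[n]$ (with $m$ at most the number of columns), $[K]$ denotes $\det_q$ of the $m\times m$ matrix whose $t$-th row is $(x_{k_t1},\dots,x_{k_tm})$. For tuples $A,B,\dots$, $A|B$ denotes their concatenation and $[A|B]$ the corresponding quantum minor. For a tuple $(a_1,\dots,a_m)$ of distinct integers, $\ell(a_1,\dots,a_m)$ is its number of inversions, i.e. the number of pairs $u<v$ with $a_u>a_v$ (the minimal number of adjacent swaps needed to sort it). *)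

theory Defs
  imports "HOL-Combinatorics.Permutations"
begin

definition ninv :: "nat list \<Rightarrow> nat" where
  "ninv xs = card {(u, v). u < v \<and> v < length xs \<and> xs ! v < xs ! u}"

text \<open>emb makes the ring 'a an algebra over the field 'k (central unital ring homomorphism).\<close>
definition is_algebra_emb :: "('k::field \<Rightarrow> 'a::ring_1) \<Rightarrow> bool" where
  "is_algebra_emb emb \<longleftrightarrow> emb 1 = 1 \<and> (\<forall>a b. emb (a + b) = emb a + emb b)
     \<and> (\<forall>a b. emb (a * b) = emb a * emb b) \<and> (\<forall>a y. emb a * y = y * emb a)"

definition q_generic :: "('k::field \<Rightarrow> 'a::ring_1) \<Rightarrow> 'k \<Rightarrow> (nat \<Rightarrow> nat \<Rightarrow> 'a) \<Rightarrow> nat \<Rightarrow> nat \<Rightarrow> bool" where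
  "q_generic emb q x n d \<longleftrightarrow>
     (\<forall>k i j. k \<in> {1..n} \<and> 1 \<le> i \<and> i < j \<and> j \<le> d \<longrightarrow> x k j * x k i = emb q * x k i * x k j) \<and>
     (\<forall>i j k. 1 \<le> i \<and> i < j \<and> j \<le> n \<and> k \<in> {1..d} \<longrightarrow> x j k * x i k = emb q * x i k * x j k) \<and>
     (\<forall>i j k l. 1 \<le> i \<and> i < j \<and> j \<le> n \<and> 1 \<le> k \<and> k < l \<and> l \<le> d \<longrightarrow>
        x j k * x i l = x i l * x j k \<and>
        x j l * x i k = x i k * x j l + emb (q - inverse q) * x i l * x j k)"

text \<open>Quantum minor [K]: quantum determinant of the matrix whose t-th row is (x_{k_t 1},...,x_{k_t m}).\<close>
definition qminor :: "('k::field \<Rightarrow> 'a::ring_1) \<Rightarrow> 'k \<Rightarrow> (nat \<Rightarrow> nat \<Rightarrow> 'a) \<Rightarrow> nat list \<Rightarrow> 'a" where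
  "qminor emb q x K =
     (\<Sum>\<sigma> \<in> {\<sigma>. \<sigma> permutes {..<length K}}.
        emb ((- q) powi (- int (ninv (map \<sigma> [0..<length K]))))
        * prod_list (map (\<lambda>t. x (K ! t) (\<sigma> t + 1)) [0..<length K]))"

end

theory Submission
  imports Defs
begin

text \<open>
  Reindex the outer sum by the removed row i and exchange the two summations: the pairs
  (i, \<Lambda>') with \<Lambda>' \<subseteq> I - {i} are the pairs (\<Lambda>, i) with i \<in> \<Lambda> = insert i \<Lambda>'.
  Swapping two adjacent rows a < b multiplies a quantum minor by (-q)^-1: pairing every permutation
  with its composite with the adjacent transposition, the two resulting pairs of monomials are
  related by the 2x2 relations of a q-generic matrix. Hence moving row i of [\<Lambda>'|i|J] to its
  sorted place in \<Lambda> costs (-q)^-g with g = #{y \<in> \<Lambda>. i < y}. Comparing inversion numbers,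
  the term of (\<Lambda>, i) is then q^(2h) times the term of \<Lambda>, where h = #{y \<in> \<Lambda>. y < i}
  takes each value 0, ..., r - 1 exactly once as i ranges over \<Lambda>.
\<close>

section \<open>Inversion numbers\<close>

definition inversions :: "nat list \<Rightarrow> (nat \<times> nat) set" where
  "inversions xs = {(u, v). u < v \<and> v < length xs \<and> xs ! v < xs ! u}"

lemma ninv_eq_card_inversions: "ninv xs = card (inversions xs)"
  by (simp add: ninv_def inversions_def)

lemma finite_inversions: "finite (inversions xs)"
  by (rule finite_subset[of _ "{..<length xs} \<times> {..<length xs}"]) (auto simp: inversions_def)

lemma ninv_swap_adjacent:
  fixes xs ys :: "nat list"
  assumes "a < b"
  shows "ninv (xs @ [b, a] @ ys) = Suc (ninv (xs @ [a, b] @ ys))"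
proof -
  define p where "p = length xs"
  define t where "t = transpose p (Suc p)"
  define zs where "zs = xs @ [a, b] @ ys"
  define zs' where "zs' = xs @ [b, a] @ ys"
  let ?g = "\<lambda>(u, v). (t u, t v)"
  have nth_zs': "zs' ! w = zs ! t w" for w
    by (cases "w < p") (auto simp: zs_def zs'_def t_def p_def transpose_def nth_append)
  have t_mono: "t u < t v" if "u < v" "(u, v) \<noteq> (p, Suc p)" for u v
    using that by (auto simp: t_def transpose_def)
  have t_eq_iff: "t u = v \<longleftrightarrow> u = t v" for u v
    by (auto simp: t_def transpose_def)
  have t_length: "t v < length zs \<longleftrightarrow> v < length zs" for v
    by (auto simp: t_def transpose_def zs_def p_def)
  have "bij_betw ?g (inversions zs) (inversions zs' - {(p, Suc p)})"
  proof (rule bij_betw_byWitness[where f' = ?g])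
    show "\<forall>z\<in>inversions zs. ?g (?g z) = z" "\<forall>z\<in>inversions zs' - {(p, Suc p)}. ?g (?g z) = z"
      by (auto simp: t_def)
    have "(p, Suc p) \<notin> inversions zs"
      using assms by (auto simp: inversions_def zs_def p_def nth_append)
    then show "?g ` inversions zs \<subseteq> inversions zs' - {(p, Suc p)}"
      using t_mono t_length nth_zs' t_eq_iff by (auto simp: inversions_def zs'_def zs_def t_def)
    show "?g ` (inversions zs' - {(p, Suc p)}) \<subseteq> inversions zs"
      using t_mono t_length nth_zs' by (auto simp: inversions_def zs'_def zs_def t_def)
  qed
  moreover have "(p, Suc p) \<in> inversions zs'"
    using assms by (auto simp: inversions_def zs'_def p_def nth_append)
  ultimately have "card (inversions zs') = Suc (card (inversions zs))"
    by (metis bij_betw_same_card card_Suc_Diff1 finite_inversions)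
  then show ?thesis
    by (simp add: ninv_eq_card_inversions zs_def zs'_def)
qed

lemma inversions_append_sorted:
  assumes "sorted_wrt (<) xs" "sorted_wrt (<) ys" "(u, v) \<in> inversions (xs @ ys)"
  shows "u < length xs \<and> length xs \<le> v"
proof
  have inv: "u < v" "v < length (xs @ ys)" "(xs @ ys) ! v < (xs @ ys) ! u"
    using assms(3) by (auto simp: inversions_def)
  show "u < length xs"
  proof (rule ccontr)
    assume "\<not> u < length xs"
    then have "ys ! (u - length xs) < ys ! (v - length xs)"
      using inv by (intro sorted_wrt_nth_less[OF assms(2)]) auto
    then show False using inv \<open>\<not> u < length xs\<close> by (auto simp: nth_append)
  qed
  show "length xs \<le> v"
  proof (rule ccontr)
    assume "\<not> length xs \<le> v"
    then have "xs ! u < xs ! v"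
      using inv by (intro sorted_wrt_nth_less[OF assms(1)]) auto
    then show False using inv \<open>\<not> length xs \<le> v\<close> by (auto simp: nth_append)
  qed
qed

definition cross_inversions :: "'a::linorder set \<Rightarrow> 'a set \<Rightarrow> nat" where
  "cross_inversions A B = card {(a, b). a \<in> A \<and> b \<in> B \<and> b < a}"

lemma ninv_sorted_list_of_set_append:
  assumes "finite A" "finite B"
  shows "ninv (sorted_list_of_set A @ sorted_list_of_set B) = cross_inversions A B"
proof -
  define xs where "xs = sorted_list_of_set A"
  define ys where "ys = sorted_list_of_set B"
  define l where "l = length xs"
  let ?zs = "xs @ ys" and ?g = "\<lambda>(u, v). ((xs @ ys) ! u, (xs @ ys) ! v)"
  have xs: "sorted_wrt (<) xs" "distinct xs" "set xs = A"
    and ys: "sorted_wrt (<) ys" "distinct ys" "set ys = B"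
    using assms by (simp_all add: xs_def ys_def)
  have straddle: "u < l \<and> l \<le> v" if "(u, v) \<in> inversions ?zs" for u v
    using inversions_append_sorted[OF xs(1) ys(1) that] by (simp add: l_def)
  have "bij_betw ?g (inversions ?zs) {(a, b). a \<in> A \<and> b \<in> B \<and> b < a}"
  proof (rule bij_betw_imageI)
    show "inj_on ?g (inversions ?zs)"
      using straddle xs(2) ys(2)
      by (fastforce simp: inj_on_def inversions_def nth_append l_def nth_eq_iff_index_eq)
    show "?g ` inversions ?zs = {(a, b). a \<in> A \<and> b \<in> B \<and> b < a}"
    proof (rule set_eqI, rule iffI)
      fix z assume "z \<in> ?g ` inversions ?zs"
      then show "z \<in> {(a, b). a \<in> A \<and> b \<in> B \<and> b < a}"
        using straddle xs(3) ys(3) by (fastforce simp: inversions_def nth_append l_def)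
    next
      fix z assume "z \<in> {(a, b). a \<in> A \<and> b \<in> B \<and> b < a}"
      then obtain u w where "u < l" "w < length ys" "z = (xs ! u, ys ! w)" "ys ! w < xs ! u"
        using xs(3) ys(3) by (auto simp: in_set_conv_nth l_def)
      then have "(u, l + w) \<in> inversions ?zs" "z = ?g (u, l + w)"
        by (auto simp: inversions_def nth_append l_def)
      then show "z \<in> ?g ` inversions ?zs" by blast
    qed
  qed
  then show ?thesis
    by (simp add: ninv_eq_card_inversions cross_inversions_def bij_betw_same_card xs_def ys_def)
qed

lemma cross_inversions_Un_left:
  assumes "finite A1" "finite A2" "finite B" "A1 \<inter> A2 = {}"
  shows "cross_inversions (A1 \<union> A2) B = cross_inversions A1 B + cross_inversions A2 B"
proof -
  have split: "{(a, b). a \<in> A1 \<union> A2 \<and> b \<in> B \<and> b < a}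
      = {(a, b). a \<in> A1 \<and> b \<in> B \<and> b < a} \<union> {(a, b). a \<in> A2 \<and> b \<in> B \<and> b < a}" by auto
  have fin: "finite {(a, b). a \<in> A \<and> b \<in> B \<and> b < a}" if "finite A" for A
    by (rule finite_subset[of _ "A \<times> B"]) (use that assms(3) in auto)
  show ?thesis
    unfolding cross_inversions_def split by (rule card_Un_disjoint) (use fin assms in auto)
qed

lemma cross_inversions_Un_right:
  assumes "finite A" "finite B1" "finite B2" "B1 \<inter> B2 = {}"
  shows "cross_inversions A (B1 \<union> B2) = cross_inversions A B1 + cross_inversions A B2"
proof -
  have split: "{(a, b). a \<in> A \<and> b \<in> B1 \<union> B2 \<and> b < a}
      = {(a, b). a \<in> A \<and> b \<in> B1 \<and> b < a} \<union> {(a, b). a \<in> A \<and> b \<in> B2 \<and> b < a}" by auto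
  have fin: "finite {(a, b). a \<in> A \<and> b \<in> B \<and> b < a}" if "finite B" for B
    by (rule finite_subset[of _ "A \<times> B"]) (use that assms(1) in auto)
  show ?thesis
    unfolding cross_inversions_def split by (rule card_Un_disjoint) (use fin assms in auto)
qed

lemma cross_inversions_singleton_right:
  "cross_inversions A {i} = card {a \<in> A. i < a}"
proof -
  have "{(a, b). a \<in> A \<and> b \<in> {i} \<and> b < a} = (\<lambda>a. (a, i)) ` {a \<in> A. i < a}" by auto
  then show ?thesis
    unfolding cross_inversions_def by (simp add: card_image inj_on_def)
qed

lemma ninv_remove_row:
  fixes S \<Lambda> :: "nat set"
  assumes "finite S" "\<Lambda> \<subseteq> S" "i \<in> \<Lambda>"
  shows "ninv (sorted_list_of_set (S - {i}) @ [i])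
           + ninv (sorted_list_of_set (S - \<Lambda>) @ sorted_list_of_set (\<Lambda> - {i}))
       = ninv (sorted_list_of_set (S - \<Lambda>) @ sorted_list_of_set \<Lambda>) + card {y \<in> \<Lambda>. i < y}"
proof -
  define T where "T = S - \<Lambda>"
  have fin: "finite \<Lambda>" "finite T" using assms(1,2) finite_subset by (auto simp: T_def)
  have "S - {i} = T \<union> (\<Lambda> - {i})" using assms(2,3) by (auto simp: T_def)
  then have "ninv (sorted_list_of_set (S - {i}) @ [i]) = cross_inversions (T \<union> (\<Lambda> - {i})) {i}"
    using ninv_sorted_list_of_set_append[of "S - {i}" "{i}"] fin by simp
  also have "\<dots> = cross_inversions T {i} + cross_inversions (\<Lambda> - {i}) {i}"
    using fin by (intro cross_inversions_Un_left) (auto simp: T_def)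
  also have "cross_inversions (\<Lambda> - {i}) {i} = card {y \<in> \<Lambda>. i < y}"
    unfolding cross_inversions_singleton_right by (rule arg_cong[where f = card]) auto
  finally have "ninv (sorted_list_of_set (S - {i}) @ [i]) = cross_inversions T {i} + card {y \<in> \<Lambda>. i < y}" .
  moreover have "ninv (sorted_list_of_set T @ sorted_list_of_set \<Lambda>)
      = cross_inversions T (\<Lambda> - {i}) + cross_inversions T {i}"
    using ninv_sorted_list_of_set_append[of T \<Lambda>] cross_inversions_Un_right[of T "\<Lambda> - {i}" "{i}"] fin assms(3)
    by (simp add: insert_absorb)
  moreover have "ninv (sorted_list_of_set T @ sorted_list_of_set (\<Lambda> - {i})) = cross_inversions T (\<Lambda> - {i})"
    using fin by (simp add: ninv_sorted_list_of_set_append)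
  ultimately show ?thesis unfolding T_def by simp
qed

lemma sorted_list_of_set_Un_less:
  fixes A B :: "'a::linorder set"
  assumes "finite A" "finite B" "\<forall>a\<in>A. \<forall>b\<in>B. a < b"
  shows "sorted_list_of_set (A \<union> B) = sorted_list_of_set A @ sorted_list_of_set B"
  by (rule strict_sorted_equal) (use assms in \<open>auto simp: sorted_wrt_append\<close>)

lemma bij_betw_card_less:
  fixes A :: "'a::linorder set"
  assumes "finite A"
  shows "bij_betw (\<lambda>a. card {b \<in> A. b < a}) A {..<card A}"
proof -
  let ?rank = "\<lambda>a. card {b \<in> A. b < a}"
  have rank_less: "?rank a < ?rank a'" if "a \<in> A" "a' \<in> A" "a < a'" for a a'
    using that assms by (intro psubset_card_mono) auto
  have "inj_on ?rank A"
  proof (rule inj_onI)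
    fix a a' assume "a \<in> A" "a' \<in> A" "?rank a = ?rank a'"
    then show "a = a'" using rank_less[of a a'] rank_less[of a' a] by (cases a a' rule: linorder_cases) auto
  qed
  moreover have "?rank a < card A" if "a \<in> A" for a
    using that assms by (intro psubset_card_mono) auto
  ultimately show ?thesis
    using assms by (simp add: bij_betw_def card_image card_subset_eq image_subset_iff)
qed

lemma card_split_at:
  fixes A :: "'a::linorder set"
  assumes "finite A" "i \<in> A"
  shows "card A = Suc (card {a \<in> A. a < i} + card {a \<in> A. i < a})"
proof -
  have "A = insert i ({a \<in> A. a < i} \<union> {a \<in> A. i < a})" using assms(2) by auto
  then have "card A = card (insert i ({a \<in> A. a < i} \<union> {a \<in> A. i < a}))"
    by (rule arg_cong)
  also have "\<dots> = Suc (card ({a \<in> A. a < i} \<union> {a \<in> A. i < a}))"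
    using assms(1) by (intro card_insert_disjoint) auto
  also have "\<dots> = Suc (card {a \<in> A. a < i} + card {a \<in> A. i < a})"
    using assms(1) by (subst card_Un_disjoint) auto
  finally show ?thesis .
qed

lemma sum_pointed_subsets:
  fixes F :: "'a \<Rightarrow> 'a set \<Rightarrow> 'b::comm_monoid_add"
  assumes "finite S"
  shows "(\<Sum>i\<in>S. \<Sum>B | B \<subseteq> S - {i} \<and> card B = k. F i B)
       = (\<Sum>A | A \<subseteq> S \<and> card A = Suc k. \<Sum>i\<in>A. F i (A - {i}))"
proof -
  let ?Subsets = "{A. A \<subseteq> S \<and> card A = Suc k}"
  have "(\<Sum>B | B \<subseteq> S - {i} \<and> card B = k. F i B) = (\<Sum>A\<in>{A \<in> ?Subsets. i \<in> A}. F i (A - {i}))"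
    if "i \<in> S" for i
  proof (rule sum.reindex_bij_witness[where i = "\<lambda>A. A - {i}" and j = "insert i"])
    fix A assume "A \<in> {A \<in> ?Subsets. i \<in> A}"
    then show "insert i (A - {i}) = A" "A - {i} \<in> {B. B \<subseteq> S - {i} \<and> card B = k}"
      by (auto simp: insert_absorb)
  next
    fix B assume B: "B \<in> {B. B \<subseteq> S - {i} \<and> card B = k}"
    then have "finite B" "i \<notin> B" using assms finite_subset by auto
    then show "insert i B - {i} = B" "insert i B \<in> {A \<in> ?Subsets. i \<in> A}"
      using B that by auto
  qed (auto simp: subset_Diff_insert)
  then have "(\<Sum>i\<in>S. \<Sum>B | B \<subseteq> S - {i} \<and> card B = k. F i B)
      = (\<Sum>i\<in>S. \<Sum>A\<in>{A \<in> ?Subsets. i \<in> A}. F i (A - {i}))"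
    by (rule sum.cong[OF refl])
  also have "\<dots> = (\<Sum>A\<in>?Subsets. \<Sum>i\<in>{i \<in> S. i \<in> A}. F i (A - {i}))"
    using assms by (intro sum.swap_restrict) auto
  also have "\<dots> = (\<Sum>A\<in>?Subsets. \<Sum>i\<in>A. F i (A - {i}))"
    by (rule sum.cong[OF refl], rule sum.cong) auto
  finally show ?thesis .
qed

lemma sum_remove_nth_sorted:
  assumes "sorted_wrt (<) I"
  shows "(\<Sum>s = 1..length I. f (take (s - 1) I @ drop s I) (I ! (s - 1)))
       = (\<Sum>i\<in>set I. f (sorted_list_of_set (set I - {i})) i)"
proof -
  have distinct: "distinct I" using assms by (simp add: strict_sorted_iff)
  have remove_nth: "take k I @ drop (Suc k) I = sorted_list_of_set (set I - {I ! k})"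
    if "k < length I" for k
  proof -
    define xs ys where "xs = take k I" and "ys = drop (Suc k) I"
    have "xs @ I ! k # ys = I"
      using id_take_nth_drop[OF that] by (simp add: xs_def ys_def)
    then have split: "sorted_wrt (<) (xs @ I ! k # ys)" "distinct (xs @ I ! k # ys)" "set (xs @ I ! k # ys) = set I"
      using assms distinct by simp_all
    show ?thesis
      unfolding xs_def[symmetric] ys_def[symmetric]
      by (rule strict_sorted_equal[symmetric]) (use split in \<open>auto simp: sorted_wrt_append\<close>)
  qed
  have "(\<Sum>s = 1..length I. f (take (s - 1) I @ drop s I) (I ! (s - 1)))
      = (\<Sum>k<length I. f (sorted_list_of_set (set I - {I ! k})) (I ! k))"
    by (simp add: sum.atLeast1_atMost_eq remove_nth)
  also have "\<dots> = (\<Sum>i\<in>set I. f (sorted_list_of_set (set I - {i})) i)"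
    by (rule sum.reindex_bij_betw[OF bij_betw_nth[OF distinct refl refl]])
  finally show ?thesis .
qed

lemma sum_permutes_pair_transpose:
  fixes A :: "'a::linorder set" and f :: "('a \<Rightarrow> 'a) \<Rightarrow> 'b::comm_monoid_add"
  assumes "finite A" "a \<in> A" "b \<in> A" "a \<noteq> b"
  shows "(\<Sum>\<sigma> | \<sigma> permutes A. f \<sigma>)
       = (\<Sum>\<sigma> | \<sigma> permutes A \<and> \<sigma> a < \<sigma> b. f \<sigma> + f (\<sigma> \<circ> transpose a b))"
proof -
  let ?P = "{\<sigma>. \<sigma> permutes A}" and ?Asc = "{\<sigma>. \<sigma> permutes A \<and> \<sigma> a < \<sigma> b}"
  let ?t = "transpose a b"
  have t: "?t permutes A" using assms by (intro permutes_swap_id) auto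
  have distinct_values: "\<sigma> a \<noteq> \<sigma> b" if "\<sigma> permutes A" for \<sigma>
    using that assms(4) permutes_inj by (metis injD)
  have "(\<Sum>\<sigma>\<in>?P. f \<sigma>) = (\<Sum>\<sigma>\<in>?P - ?Asc. f \<sigma>) + (\<Sum>\<sigma>\<in>?Asc. f \<sigma>)"
    using assms(1) by (intro sum.subset_diff) (auto simp: finite_permutations)
  also have "(\<Sum>\<sigma>\<in>?P - ?Asc. f \<sigma>) = (\<Sum>\<sigma>\<in>?Asc. f (\<sigma> \<circ> ?t))"
  proof (rule sum.reindex_bij_witness[of _ "\<lambda>\<sigma>. \<sigma> \<circ> ?t" "\<lambda>\<sigma>. \<sigma> \<circ> ?t"])
    fix \<sigma> assume \<sigma>: "\<sigma> \<in> ?Asc"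
    show "\<sigma> \<circ> ?t \<circ> ?t = \<sigma>" by (simp add: comp_assoc)
    have "\<sigma> \<circ> ?t permutes A" using \<sigma> t by (simp add: permutes_compose)
    then show "\<sigma> \<circ> ?t \<in> ?P - ?Asc" using \<sigma> distinct_values[of \<sigma>] by auto
  next
    fix \<sigma> assume \<sigma>: "\<sigma> \<in> ?P - ?Asc"
    show "\<sigma> \<circ> ?t \<circ> ?t = \<sigma>" by (simp add: comp_assoc)
    have "\<sigma> \<circ> ?t permutes A" using \<sigma> t by (simp add: permutes_compose)
    then show "\<sigma> \<circ> ?t \<in> ?Asc" using \<sigma> distinct_values[of \<sigma>] by auto
  qed (simp add: comp_assoc)
  finally show ?thesis by (simp add: sum.distrib add.commute)
qed

section \<open>Quantum minors of a q-generic matrix\<close>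

locale algebra_embedding =
  fixes emb :: "'k::field \<Rightarrow> 'a::ring_1"
  assumes is_algebra_emb: "is_algebra_emb emb"
begin

lemma emb_add: "emb (c + c') = emb c + emb c'"
  and emb_mult: "emb (c * c') = emb c * emb c'"
  and emb_one: "emb 1 = 1"
  and emb_commute: "emb c * y = y * emb c"
  using is_algebra_emb unfolding is_algebra_emb_def by blast+

lemma emb_zero: "emb 0 = 0"
  using emb_add[of 0 0] by simp

lemma emb_sum: "emb (\<Sum>i\<in>A. f i) = (\<Sum>i\<in>A. emb (f i))"
  by (induction A rule: infinite_finite_induct) (simp_all add: emb_zero emb_add)

lemma emb_left_commute: "y * (emb c * z) = emb c * (y * z)"
  by (metis emb_commute mult.assoc)

end

text \<open>The columns C are 0-based, as produced by permutations of {..<length K}.\<close>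

definition qminor_term ::
    "('k::field \<Rightarrow> 'a::ring_1) \<Rightarrow> 'k \<Rightarrow> (nat \<Rightarrow> nat \<Rightarrow> 'a) \<Rightarrow> nat list \<Rightarrow> nat list \<Rightarrow> 'a"
  where "qminor_term emb q x K C =
    emb ((- q) powi - int (ninv C)) * prod_list (map (\<lambda>(k, c). x k (Suc c)) (zip K C))"

locale q_generic_matrix = algebra_embedding emb
  for emb :: "'k::field \<Rightarrow> 'a::ring_1" +
  fixes q :: 'k and x :: "nat \<Rightarrow> nat \<Rightarrow> 'a" and n d :: nat
  assumes q_generic: "q_generic emb q x n d"
    and q_nonzero: "q \<noteq> 0"
begin

lemma emb_powi_add: "emb ((- q) powi (k + l)) = emb ((- q) powi k) * emb ((- q) powi l)"
  by (simp add: power_int_add q_nonzero emb_mult)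

lemma q_exchange:
  assumes "1 \<le> a" "a < b" "b \<le> n" "1 \<le> c" "c < e" "e \<le> d"
  shows "x b c * x a e + emb ((- q) powi -1) * (x b e * x a c)
       = emb ((- q) powi -1) * (x a c * x b e + emb ((- q) powi -1) * (x a e * x b c))"
proof -
  have commute: "x b c * x a e = x a e * x b c"
    and straighten: "x b e * x a c = x a c * x b e + emb (q - inverse q) * x a e * x b c"
    using q_generic assms unfolding q_generic_def by blast+
  define E where "E = emb ((- q) powi -1)"
  define u where "u = x a e * x b c"
  have "1 + (- q) powi -1 * (q - inverse q) = (- q) powi -1 * (- q) powi -1"
    using q_nonzero by (simp add: power_int_minus field_simps)
  then have scalar: "u + E * (emb (q - inverse q) * u) = E * (E * u)"
    unfolding E_def
    by (metis (no_types) emb_add emb_mult emb_one distrib_right mult_1_left mult.assoc)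
  have "x b c * x a e + E * (x b e * x a c) = E * (x a c * x b e) + (u + E * (emb (q - inverse q) * u))"
    unfolding commute straighten u_def by (simp only: distrib_left mult.assoc add.commute add.left_commute)
  also have "\<dots> = E * (x a c * x b e + E * u)"
    unfolding scalar by (simp only: distrib_left)
  finally show ?thesis unfolding E_def u_def .
qed

lemma qminor_eq_sum_qminor_term:
  "qminor emb q x K = (\<Sum>\<sigma> | \<sigma> permutes {..<length K}. qminor_term emb q x K (map \<sigma> [0..<length K]))"
proof -
  have "map (\<lambda>t. x (K ! t) (\<sigma> t + 1)) [0..<length K]
      = map (\<lambda>(k, c). x k (Suc c)) (zip K (map \<sigma> [0..<length K]))" for \<sigma>
    by (rule nth_equalityI) auto
  then show ?thesis
    unfolding qminor_def qminor_term_def by simp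
qed

lemma qminor_term_exchange:
  assumes rows: "1 \<le> a" "a < b" "b \<le> n" and cols: "c < e" "e < d"
    and "length P = length C"
  shows "qminor_term emb q x (P @ [b, a] @ R) (C @ [c, e] @ D) + qminor_term emb q x (P @ [b, a] @ R) (C @ [e, c] @ D)
       = emb ((- q) powi -1) *
         (qminor_term emb q x (P @ [a, b] @ R) (C @ [c, e] @ D) + qminor_term emb q x (P @ [a, b] @ R) (C @ [e, c] @ D))"
proof -
  define E where "E = emb ((- q) powi -1)"
  define w where "w = emb ((- q) powi - int (ninv (C @ [c, e] @ D)))"
  define Pre where "Pre = prod_list (map (\<lambda>(k, c). x k (Suc c)) (zip P C))"
  define Suf where "Suf = prod_list (map (\<lambda>(k, c). x k (Suc c)) (zip R D))"
  have "- int (ninv (C @ [e, c] @ D)) = - int (ninv (C @ [c, e] @ D)) + -1"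
    using ninv_swap_adjacent[OF cols(1)] by simp
  then have weight_swapped: "emb ((- q) powi - int (ninv (C @ [e, c] @ D))) = w * E"
    by (simp only: w_def E_def emb_powi_add)
  have "qminor_term emb q x (P @ [k, k'] @ R) (C @ [c', e'] @ D)
      = emb ((- q) powi - int (ninv (C @ [c', e'] @ D))) * (Pre * (x k (Suc c') * (x k' (Suc e') * Suf)))"
    for k k' c' e'
    using assms(6) by (simp add: qminor_term_def Pre_def Suf_def zip_append mult.assoc)
  note terms = this[of b a c e] this[of b a e c] this[of a b c e] this[of a b e c]
  have commute: "w * (E * z) = E * (w * z)" "Pre * (E * z) = E * (Pre * z)" for z
    unfolding E_def by (simp_all only: emb_left_commute)
  have "qminor_term emb q x (P @ [b, a] @ R) (C @ [c, e] @ D) + qminor_term emb q x (P @ [b, a] @ R) (C @ [e, c] @ D)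
      = w * (Pre * ((x b (Suc c) * x a (Suc e) + E * (x b (Suc e) * x a (Suc c))) * Suf))"
    unfolding terms weight_swapped w_def[symmetric]
    by (simp only: distrib_left distrib_right mult.assoc commute)
  also have "\<dots> = w * (Pre * (E * (x a (Suc c) * x b (Suc e) + E * (x a (Suc e) * x b (Suc c))) * Suf))"
    using q_exchange[OF rows, of "Suc c" "Suc e"] cols by (simp add: E_def)
  also have "\<dots> = E * (qminor_term emb q x (P @ [a, b] @ R) (C @ [c, e] @ D) + qminor_term emb q x (P @ [a, b] @ R) (C @ [e, c] @ D))"
    unfolding terms weight_swapped w_def[symmetric]
    by (simp only: distrib_left distrib_right mult.assoc commute)
  finally show ?thesis unfolding E_def .
qed

lemma qminor_swap_adjacent_rows:
  assumes rows: "1 \<le> a" "a < b" "b \<le> n" and "length (P @ [a, b] @ R) \<le> d"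
  shows "qminor emb q x (P @ [b, a] @ R) = emb ((- q) powi -1) * qminor emb q x (P @ [a, b] @ R)"
proof -
  define m where "m = length (P @ [a, b] @ R)"
  define p where "p = length P"
  define t where "t = transpose p (Suc p)"
  let ?Asc = "{\<sigma>. \<sigma> permutes {..<m} \<and> \<sigma> p < \<sigma> (Suc p)}"
  let ?term = "\<lambda>K \<sigma>. qminor_term emb q x K (map \<sigma> [0..<m])"
  have "Suc p < m" "length (P @ [b, a] @ R) = m" by (simp_all add: m_def p_def)
  have "[0..<m] = [0..<p] @ [p..<m]"
    using upt_add_eq_append[of 0 p "m - p"] \<open>Suc p < m\<close> by simp
  also have "[p..<m] = [p, Suc p] @ [Suc (Suc p)..<m]"
    using \<open>Suc p < m\<close> by (simp add: upt_conv_Cons)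
  finally have upt: "[0..<m] = [0..<p] @ [p, Suc p] @ [Suc (Suc p)..<m]" .
  have cols: "map \<sigma> [0..<m] = map \<sigma> [0..<p] @ [\<sigma> p, \<sigma> (Suc p)] @ map \<sigma> [Suc (Suc p)..<m]"
    and cols_swapped: "map (\<sigma> \<circ> t) [0..<m] = map \<sigma> [0..<p] @ [\<sigma> (Suc p), \<sigma> p] @ map \<sigma> [Suc (Suc p)..<m]"
    for \<sigma> :: "nat \<Rightarrow> nat"
    by (simp_all add: upt t_def transpose_def)
  have pair: "?term (P @ [b, a] @ R) \<sigma> + ?term (P @ [b, a] @ R) (\<sigma> \<circ> t)
      = emb ((- q) powi -1) * (?term (P @ [a, b] @ R) \<sigma> + ?term (P @ [a, b] @ R) (\<sigma> \<circ> t))"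
    if "\<sigma> \<in> ?Asc" for \<sigma>
  proof -
    have "\<sigma> (Suc p) < m"
      using that \<open>Suc p < m\<close> permutes_in_image[of \<sigma> "{..<m}" "Suc p"] by simp
    then show ?thesis
      unfolding cols[of \<sigma>] cols_swapped[of \<sigma>]
      using that assms(4) by (intro qminor_term_exchange[OF rows]) (simp_all add: m_def p_def)
  qed
  have "qminor emb q x (P @ [b, a] @ R)
      = (\<Sum>\<sigma>\<in>?Asc. ?term (P @ [b, a] @ R) \<sigma> + ?term (P @ [b, a] @ R) (\<sigma> \<circ> t))"
    unfolding qminor_eq_sum_qminor_term \<open>length (P @ [b, a] @ R) = m\<close> t_def
    using \<open>Suc p < m\<close> by (intro sum_permutes_pair_transpose) auto
  also have "\<dots> = emb ((- q) powi -1)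
      * (\<Sum>\<sigma>\<in>?Asc. ?term (P @ [a, b] @ R) \<sigma> + ?term (P @ [a, b] @ R) (\<sigma> \<circ> t))"
    unfolding sum_distrib_left by (intro sum.cong refl pair)
  also have "(\<Sum>\<sigma>\<in>?Asc. ?term (P @ [a, b] @ R) \<sigma> + ?term (P @ [a, b] @ R) (\<sigma> \<circ> t))
      = qminor emb q x (P @ [a, b] @ R)"
    unfolding qminor_eq_sum_qminor_term m_def[symmetric] t_def
    using \<open>Suc p < m\<close> by (intro sum_permutes_pair_transpose[symmetric]) auto
  finally show ?thesis .
qed

lemma qminor_move_left:
  assumes "1 \<le> i" "\<forall>y\<in>set L. i < y \<and> y \<le> n" "length (P @ L @ [i] @ R) \<le> d"
  shows "qminor emb q x (P @ L @ [i] @ R) = emb ((- q) powi - int (length L)) * qminor emb q x (P @ [i] @ L @ R)"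
  using assms(2,3)
proof (induction L arbitrary: P)
  case Nil
  then show ?case by (simp add: emb_one)
next
  case (Cons y L)
  have "qminor emb q x (P @ (y # L) @ [i] @ R) = qminor emb q x ((P @ [y]) @ L @ [i] @ R)"
    by simp
  also have "\<dots> = emb ((- q) powi - int (length L)) * qminor emb q x (P @ [y, i] @ L @ R)"
    using Cons.IH[of "P @ [y]"] Cons.prems by simp
  also have "qminor emb q x (P @ [y, i] @ L @ R) = emb ((- q) powi -1) * qminor emb q x (P @ [i, y] @ L @ R)"
    using Cons.prems assms(1) by (intro qminor_swap_adjacent_rows) auto
  also have "emb ((- q) powi - int (length L)) * (emb ((- q) powi -1) * qminor emb q x (P @ [i, y] @ L @ R))
      = emb ((- q) powi (- int (length L) + -1)) * qminor emb q x (P @ [i, y] @ L @ R)"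
    by (simp only: emb_powi_add mult.assoc)
  also have "- int (length L) + -1 = - int (length (y # L))"
    by simp
  finally show ?case by simp
qed

lemma qminor_sort_row:
  assumes "finite \<Lambda>" "\<Lambda> \<subseteq> {1..n}" "i \<in> \<Lambda>" "card \<Lambda> + length J \<le> d"
  shows "qminor emb q x (sorted_list_of_set (\<Lambda> - {i}) @ [i] @ J)
       = emb ((- q) powi - int (card {y \<in> \<Lambda>. i < y})) * qminor emb q x (sorted_list_of_set \<Lambda> @ J)"
proof -
  define Below where "Below = {y \<in> \<Lambda>. y < i}"
  define Above where "Above = {y \<in> \<Lambda>. i < y}"
  define P where "P = sorted_list_of_set Below"
  define L where "L = sorted_list_of_set Above"
  have fin: "finite Below" "finite Above" using assms(1) by (simp_all add: Below_def Above_def)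
  have "sorted_list_of_set (Below \<union> Above) = P @ L"
    unfolding P_def L_def using fin by (intro sorted_list_of_set_Un_less) (auto simp: Below_def Above_def)
  moreover have "sorted_list_of_set (Below \<union> ({i} \<union> Above)) = P @ [i] @ L"
  proof -
    have "sorted_list_of_set ({i} \<union> Above) = [i] @ L"
      unfolding L_def using fin by (subst sorted_list_of_set_Un_less) (auto simp: Above_def)
    then show ?thesis
      unfolding P_def using fin by (subst sorted_list_of_set_Un_less) (auto simp: Below_def Above_def)
  qed
  moreover have "Below \<union> Above = \<Lambda> - {i}" "Below \<union> ({i} \<union> Above) = \<Lambda>"
    using assms(3) by (auto simp: Below_def Above_def)
  ultimately have sorted_split: "sorted_list_of_set (\<Lambda> - {i}) = P @ L" "sorted_list_of_set \<Lambda> = P @ [i] @ L"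
    by simp_all
  have "1 \<le> i" using assms(2,3) by auto
  moreover have "\<forall>y\<in>set L. i < y \<and> y \<le> n"
    using fin(2) assms(2) by (auto simp: L_def Above_def)
  moreover have "length (P @ L @ [i] @ J) \<le> d"
    using arg_cong[OF sorted_split(2), of length] assms(4) by simp
  ultimately have "qminor emb q x (P @ L @ [i] @ J)
      = emb ((- q) powi - int (length L)) * qminor emb q x (P @ [i] @ L @ J)"
    by (rule qminor_move_left)
  then show ?thesis
    unfolding sorted_split by (simp add: L_def Above_def)
qed

end

section \<open>Young symmetry expressions\<close>

definition young_term ::
    "('k::field \<Rightarrow> 'a::ring_1) \<Rightarrow> 'k \<Rightarrow> (nat \<Rightarrow> nat \<Rightarrow> 'a) \<Rightarrow> nat set \<Rightarrow> nat set \<Rightarrow> nat list \<Rightarrow> 'a"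
  where "young_term emb q x S \<Lambda> J =
    emb ((- q) powi - int (ninv (sorted_list_of_set (S - \<Lambda>) @ sorted_list_of_set \<Lambda>)))
      * qminor emb q x (sorted_list_of_set (S - \<Lambda>)) * qminor emb q x (sorted_list_of_set \<Lambda> @ J)"

definition young_symmetry ::
    "('k::field \<Rightarrow> 'a::ring_1) \<Rightarrow> 'k \<Rightarrow> (nat \<Rightarrow> nat \<Rightarrow> 'a) \<Rightarrow> nat set \<Rightarrow> nat \<Rightarrow> nat list \<Rightarrow> 'a"
  where "young_symmetry emb q x S r J =
    (\<Sum>\<Lambda> | \<Lambda> \<subseteq> S \<and> card \<Lambda> = r. young_term emb q x S \<Lambda> J)"

context q_generic_matrix
begin

lemma young_term_remove_row:
  assumes "finite S" "S \<subseteq> {1..n}" "\<Lambda> \<subseteq> S" "i \<in> \<Lambda>" "card \<Lambda> + length J \<le> d"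
  shows "emb ((- q) powi (2 * (int (card \<Lambda>) - 1) - int (ninv (sorted_list_of_set (S - {i}) @ [i]))))
           * young_term emb q x (S - {i}) (\<Lambda> - {i}) ([i] @ J)
       = emb (q ^ (2 * card {y \<in> \<Lambda>. y < i})) * young_term emb q x S \<Lambda> J"
proof -
  define T where "T = S - \<Lambda>"
  define below where "below = card {y \<in> \<Lambda>. y < i}"
  define above where "above = card {y \<in> \<Lambda>. i < y}"
  have "finite \<Lambda>" using assms(1,3) finite_subset by auto
  then have "card \<Lambda> = Suc (below + above)"
    unfolding below_def above_def using assms(4) by (rule card_split_at)
  moreover have "ninv (sorted_list_of_set (S - {i}) @ [i]) + ninv (sorted_list_of_set T @ sorted_list_of_set (\<Lambda> - {i}))
      = ninv (sorted_list_of_set T @ sorted_list_of_set \<Lambda>) + above"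
    unfolding T_def above_def using assms(1,3,4) by (rule ninv_remove_row)
  ultimately have exponent: "(2 * (int (card \<Lambda>) - 1) - int (ninv (sorted_list_of_set (S - {i}) @ [i])))
        + - int (ninv (sorted_list_of_set T @ sorted_list_of_set (\<Lambda> - {i}))) + - int above
      = int (2 * below) + - int (ninv (sorted_list_of_set T @ sorted_list_of_set \<Lambda>))"
    by presburger
  have rest: "S - {i} - (\<Lambda> - {i}) = T" using assms(4) by (auto simp: T_def)
  have move: "qminor emb q x (sorted_list_of_set (\<Lambda> - {i}) @ [i] @ J)
      = emb ((- q) powi - int above) * qminor emb q x (sorted_list_of_set \<Lambda> @ J)"
    using qminor_sort_row[OF \<open>finite \<Lambda>\<close> _ assms(4,5)] assms(2,3) by (auto simp: above_def)
  have sign: "(- q) powi int (2 * below) = q ^ (2 * below)"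
    by (simp only: power_int_of_nat) (simp add: power_mult)
  let ?QT = "qminor emb q x (sorted_list_of_set T)"
  have "emb ((- q) powi (2 * (int (card \<Lambda>) - 1) - int (ninv (sorted_list_of_set (S - {i}) @ [i]))))
           * young_term emb q x (S - {i}) (\<Lambda> - {i}) ([i] @ J)
      = emb ((- q) powi ((2 * (int (card \<Lambda>) - 1) - int (ninv (sorted_list_of_set (S - {i}) @ [i])))
          + - int (ninv (sorted_list_of_set T @ sorted_list_of_set (\<Lambda> - {i}))) + - int above))
        * (?QT * qminor emb q x (sorted_list_of_set \<Lambda> @ J))"
    unfolding young_term_def rest move
    by (simp only: emb_powi_add mult.assoc emb_left_commute[of ?QT])
  also have "\<dots> = emb (q ^ (2 * below)) * young_term emb q x S \<Lambda> J"
    unfolding exponent young_term_def T_def[symmetric] emb_powi_add sign by (simp only: mult.assoc)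
  finally show ?thesis unfolding below_def .
qed

lemma young_symmetry_reduction:
  assumes "finite S" "S \<subseteq> {1..n}" "1 \<le> r" "r + length J \<le> d"
  shows "(\<Sum>i\<in>S. emb ((- q) powi (2 * (int r - 1) - int (ninv (sorted_list_of_set (S - {i}) @ [i]))))
            * young_symmetry emb q x (S - {i}) (r - 1) ([i] @ J))
       = emb (\<Sum>t<r. q ^ (2 * t)) * young_symmetry emb q x S r J"
proof -
  let ?c = "\<lambda>i. emb ((- q) powi (2 * (int r - 1) - int (ninv (sorted_list_of_set (S - {i}) @ [i]))))"
  have "(\<Sum>i\<in>S. ?c i * young_symmetry emb q x (S - {i}) (r - 1) ([i] @ J))
      = (\<Sum>i\<in>S. \<Sum>\<Lambda>' | \<Lambda>' \<subseteq> S - {i} \<and> card \<Lambda>' = r - 1.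
           ?c i * young_term emb q x (S - {i}) \<Lambda>' ([i] @ J))"
    by (simp add: young_symmetry_def sum_distrib_left)
  also have "\<dots> = (\<Sum>\<Lambda> | \<Lambda> \<subseteq> S \<and> card \<Lambda> = r.
      \<Sum>i\<in>\<Lambda>. ?c i * young_term emb q x (S - {i}) (\<Lambda> - {i}) ([i] @ J))"
    using sum_pointed_subsets[OF assms(1), of _ "r - 1"] assms(3) by simp
  also have "\<dots> = (\<Sum>\<Lambda> | \<Lambda> \<subseteq> S \<and> card \<Lambda> = r.
      \<Sum>i\<in>\<Lambda>. emb (q ^ (2 * card {y \<in> \<Lambda>. y < i})) * young_term emb q x S \<Lambda> J)"
    using young_term_remove_row assms by (intro sum.cong refl) auto
  also have "\<dots> = (\<Sum>\<Lambda> | \<Lambda> \<subseteq> S \<and> card \<Lambda> = r. emb (\<Sum>t<r. q ^ (2 * t)) * young_term emb q x S \<Lambda> J)"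
  proof (rule sum.cong[OF refl])
    fix \<Lambda> assume "\<Lambda> \<in> {\<Lambda>. \<Lambda> \<subseteq> S \<and> card \<Lambda> = r}"
    then have "finite \<Lambda>" "card \<Lambda> = r" using assms(1) finite_subset by auto
    then have rank_sum: "(\<Sum>i\<in>\<Lambda>. q ^ (2 * card {y \<in> \<Lambda>. y < i})) = (\<Sum>t<r. q ^ (2 * t))"
      using sum.reindex_bij_betw[OF bij_betw_card_less, of \<Lambda> "\<lambda>t. q ^ (2 * t)"] by simp
    show "(\<Sum>i\<in>\<Lambda>. emb (q ^ (2 * card {y \<in> \<Lambda>. y < i})) * young_term emb q x S \<Lambda> J)
        = emb (\<Sum>t<r. q ^ (2 * t)) * young_term emb q x S \<Lambda> J"
      unfolding sum_distrib_right[symmetric] emb_sum[symmetric] rank_sum by (rule refl)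
  qed
  also have "\<dots> = emb (\<Sum>t<r. q ^ (2 * t)) * young_symmetry emb q x S r J"
    by (simp add: young_symmetry_def sum_distrib_left)
  finally show ?thesis .
qed

end

theorem mainTheorem1:
  fixes emb :: "'k::field_char_0 \<Rightarrow> 'a::ring_1"
    and q :: 'k and x :: "nat \<Rightarrow> nat \<Rightarrow> 'a" and n d r :: nat
    and I J :: "nat list"
  assumes "q \<noteq> 0" and "\<forall>m::nat. m > 0 \<longrightarrow> q ^ m \<noteq> 1"
    and "is_algebra_emb emb"
    and "q_generic emb q x n d"
    and "1 \<le> r" and "r \<le> d"
    and "sorted_wrt (<) I" and "length I = d + r" and "set I \<subseteq> {1..n}"
    and "length J = d - r" and "set J \<subseteq> {1..n}"
  shows
   "(\<Sum>s = 1..d + r.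
       let Is = take (s - 1) I @ drop s I; is = I ! (s - 1) in
       emb ((- q) powi (2 * (int r - 1) - int (ninv (Is @ [is])))) *
       (\<Sum>\<Lambda>' \<in> {\<Lambda>'. \<Lambda>' \<subseteq> set Is \<and> card \<Lambda>' = r - 1}.
          emb ((- q) powi (- int (ninv (sorted_list_of_set (set Is - \<Lambda>') @ sorted_list_of_set \<Lambda>'))))
          * qminor emb q x (sorted_list_of_set (set Is - \<Lambda>'))
          * qminor emb q x (sorted_list_of_set \<Lambda>' @ [is] @ J)))
    = emb (\<Sum>t<r. q ^ (2 * t)) *
       (\<Sum>\<Lambda> \<in> {\<Lambda>. \<Lambda> \<subseteq> set I \<and> card \<Lambda> = r}.
          emb ((- q) powi (- int (ninv (sorted_list_of_set (set I - \<Lambda>) @ sorted_list_of_set \<Lambda>))))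
          * qminor emb q x (sorted_list_of_set (set I - \<Lambda>))
          * qminor emb q x (sorted_list_of_set \<Lambda> @ J))"
proof -
  interpret q_generic_matrix emb q x n d
    using assms(1,3,4) by unfold_locales
  let ?c = "\<lambda>Is is. emb ((- q) powi (2 * (int r - 1) - int (ninv (Is @ [is]))))"
  have "(\<Sum>s = 1..d + r. let Is = take (s - 1) I @ drop s I; is = I ! (s - 1) in
          ?c Is is * young_symmetry emb q x (set Is) (r - 1) ([is] @ J))
      = (\<Sum>i\<in>set I. ?c (sorted_list_of_set (set I - {i})) i * young_symmetry emb q x (set I - {i}) (r - 1) ([i] @ J))"
    using sum_remove_nth_sorted[OF assms(7), of "\<lambda>Is is. ?c Is is * young_symmetry emb q x (set Is) (r - 1) ([is] @ J)"]
      assms(8) by (simp add: Let_def)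
  also have "\<dots> = emb (\<Sum>t<r. q ^ (2 * t)) * young_symmetry emb q x (set I) r J"
    using assms by (intro young_symmetry_reduction) auto
  finally show ?thesis
    by (simp only: young_symmetry_def young_term_def)
qed

end
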